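(* Let $w$ be a weight function on the unit circle, normalized and with orthonormal polynomials $\phi_n$ as described in the context. Assume that $w$ is differentiable in a neighborhood of the unit circle, has moments of all integral orders, and that the integrals $$\int_{|\zeta|=1}\frac{v'(z)-v'(\zeta)}{z-\zeta}\,\zeta^m\,w(\zeta)\,\frac{d\zeta}{i\zeta}$$ exist for all integers $m$, where $v=-\log w$. Then for every $n\ge 1$, $$\phi_n'(z)=n\frac{\kappa_{n-1}}{\kappa_n}\phi_{n-1}(z)-i\,\phi_n^*(z)\int_{|\zeta|=1}\frac{v'(z)-v'(\zeta)}{z-\zeta}\,\phi_n(\zeta)\overline{\phi_n^*(\zeta)}\,w(\zeta)\,d\zeta+i\,\phi_n(z)\int_{|\zeta|=1}\frac{v'(z)-v'(\zeta)}{z-\zeta}\,\phi_n(\zeta)\overline{\phi_n(\zeta)}\,w(\zeta)\,d\zeta .$$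
   Context: Let $w$ be a positive weight function on the unit circle normalized by $\int_{|\zeta|=1}w(\zeta)\frac{d\zeta}{i\zeta}=1$; all contour integrals over $|\zeta|=1$ are taken counterclockwise. Let $\phi_n(z)=\kappa_n z^n+\ell_n z^{n-1}+\cdots$, with $\kappa_n>0$, be the orthonormal polynomials: $\int_{|\zeta|=1}\phi_m(\zeta)\overline{\phi_n(\zeta)}w(\zeta)\frac{d\zeta}{i\zeta}=\delta_{m,n}$. The reciprocal polynomial of a degree-$n$ polynomial $f(z)=\sum_{k=0}^n a_kz^k$ is $f^*(z)=\sum_{k=0}^n\overline{a_k}z^{n-k}$. The external field is $v(z)$ defined by $w(z)=\exp(-v(z))$. *)

theory Defs
  imports "HOL-Complex_Analysis.Complex_Analysis" "HOL-Computational_Algebra.Polynomial"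
begin

definition recip_poly :: "nat \<Rightarrow> complex poly \<Rightarrow> complex poly" where
  "recip_poly n f = (\<Sum>k\<le>n. monom (cnj (coeff f k)) (n - k))"

end

(* Let K(z, .) = sum_{k<n} cnj (phi_k z) phi_k be the reproducing kernel of the polynomials of
   degree < n, so that phi_n'(z) = <phi_n', K(z, .)>.  On the circle cnj (K(z, zeta)) is the
   restriction of a function holomorphic in zeta off 0, so integrating the derivative of
   phi_n(zeta) cnj (K(z, zeta)) w(zeta) / (i zeta) around the circle moves the derivative onto the
   kernel and onto w, where w' = -v' w.  The kernel part leaves only the top coefficient of
   K(z, .), giving n kappa_{n-1} / kappa_n phi_{n-1}(z).  In the weight part one writes
   v'(zeta) = v'(z) - (z - zeta) (v'(z) - v'(zeta)) / (z - zeta): the v'(z) term vanishes by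
   orthogonality, and in the other one the factor z - zeta cancels the denominator of the
   Christoffel-Darboux formula
     (1 - cnj z zeta) K(z, zeta) = cnj (phi_n^*(z)) phi_n^*(zeta) - cnj (phi_n(z)) phi_n(zeta),
   which follows from the Szego recurrence. *)

theory Submission
  imports Defs
begin

lemma cnj_eq_inverse_on_unit_circle: "norm (z::complex) = 1 \<Longrightarrow> cnj z = inverse z"
  by (metis complex_norm_square inverse_unique of_real_1 power_one)

lemma contour_integral_unit_circle_param:
  "contour_integral (circlepath 0 1) (\<lambda>\<zeta>. F \<zeta> / (\<i> * \<zeta>))
   = integral {0..1} (\<lambda>t. 2 * of_real pi * F (circlepath 0 1 t))"
  unfolding contour_integral_integral
proof (rule integral_cong)
  fix t :: real
  have "circlepath 0 1 t \<noteq> 0"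
    by (simp add: circlepath)
  moreover have "vector_derivative (circlepath 0 1) (at t) = 2 * of_real pi * \<i> * circlepath 0 1 t"
    using vector_derivative_circlepath[of 0 1 t] by (simp add: circlepath)
  ultimately show "F (circlepath 0 1 t) / (\<i> * circlepath 0 1 t) * vector_derivative (circlepath 0 1) (at t)
        = 2 * of_real pi * F (circlepath 0 1 t)"
    by (simp add: field_simps)
qed

lemma contour_integrable_poly_cnj_poly:
  assumes "\<And>m::int. (\<lambda>\<zeta>. f \<zeta> * \<zeta> powi m * w \<zeta> / (\<i> * \<zeta>)) contour_integrable_on circlepath 0 1"
  shows "(\<lambda>\<zeta>. f \<zeta> * poly p \<zeta> * cnj (poly q \<zeta>) * w \<zeta>) contour_integrable_on circlepath 0 1"
proof -
  let ?G = "\<lambda>\<zeta>. \<Sum>j\<le>degree p. \<Sum>k\<le>degree q. (\<i> * coeff p j * cnj (coeff q k)) *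
              (f \<zeta> * \<zeta> powi (int j - int k + 1) * w \<zeta> / (\<i> * \<zeta>))"
  have "?G contour_integrable_on circlepath 0 1"
    by (intro contour_integrable_sum finite_atMost contour_integrable_lmul assms)
  then show ?thesis
  proof (rule contour_integrable_eq)
    fix x assume "x \<in> path_image (circlepath 0 1)"
    then have "norm x = 1" by simp
    then have nz: "x \<noteq> 0" and cx: "cnj x = inverse x"
      by (auto simp: cnj_eq_inverse_on_unit_circle)
    have pw: "x powi (int j - int k + 1) = x ^ j * inverse (x ^ k) * x" for j k
      using nz by (simp add: power_int_add power_int_diff divide_inverse)
    have "f x * poly p x * cnj (poly q x) * w x =
       (\<Sum>j\<le>degree p. \<Sum>k\<le>degree q. f x * (coeff p j * x ^ j) * (cnj (coeff q k) * cnj x ^ k) * w x)"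
      unfolding poly_altdef[of p] poly_altdef[of q]
      by (simp add: sum_product sum_distrib_left sum_distrib_right mult.assoc) (rule sum.swap)
    also have "\<dots> = ?G x"
      unfolding pw cx using nz by (simp add: power_inverse field_simps)
    finally show "?G x = f x * poly p x * cnj (poly q x) * w x" by simp
  qed
qed

section \<open>Reciprocal polynomials\<close>

lemma coeff_recip_poly:
  "coeff (recip_poly n f) j = (if j \<le> n then cnj (coeff f (n - j)) else 0)"
proof -
  have "coeff (recip_poly n f) j = (\<Sum>k\<le>n. if k = n - j \<and> j \<le> n then cnj (coeff f k) else 0)"
    unfolding recip_poly_def coeff_sum coeff_monom by (intro sum.cong) auto
  then show ?thesis
    by (simp add: sum.delta')
qed

lemma degree_recip_poly_le: "degree (recip_poly n f) \<le> n"
  by (rule degree_le) (simp add: coeff_recip_poly)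

lemma poly_recip_poly_0: "poly (recip_poly n f) 0 = cnj (coeff f n)"
  by (simp add: poly_0_coeff_0 coeff_recip_poly)

lemma poly_recip_poly_unit_circle:
  assumes "degree f \<le> n" "norm \<zeta> = 1"
  shows "poly (recip_poly n f) \<zeta> = \<zeta> ^ n * cnj (poly f \<zeta>)"
proof -
  have nz: "\<zeta> \<noteq> 0" and cz: "cnj \<zeta> = inverse \<zeta>"
    using assms(2) by (auto simp: cnj_eq_inverse_on_unit_circle)
  have "poly (recip_poly n f) \<zeta> = (\<Sum>k\<le>n. cnj (coeff f k) * \<zeta> ^ (n - k))"
    unfolding recip_poly_def by (simp add: poly_sum poly_monom)
  also have "\<dots> = (\<Sum>k\<le>n. \<zeta> ^ n * (cnj (coeff f k) * cnj \<zeta> ^ k))"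
  proof (intro sum.cong refl)
    fix k assume "k \<in> {..n}"
    then have "\<zeta> ^ n = \<zeta> ^ (n - k) * \<zeta> ^ k"
      by (simp add: power_add[symmetric])
    then show "cnj (coeff f k) * \<zeta> ^ (n - k) = \<zeta> ^ n * (cnj (coeff f k) * cnj \<zeta> ^ k)"
      using nz by (simp add: cz power_inverse field_simps)
  qed
  also have "\<dots> = \<zeta> ^ n * cnj (poly (\<Sum>k\<le>n. monom (coeff f k) k) \<zeta>)"
    by (simp add: poly_sum poly_monom sum_distrib_left)
  also have "\<dots> = \<zeta> ^ n * cnj (poly f \<zeta>)"
    by (simp only: poly_as_sum_of_monoms'[OF assms(1)])
  finally show ?thesis .
qed

lemma recip_poly_add: "recip_poly n (f + g) = recip_poly n f + recip_poly n g"
  by (rule poly_eqI) (simp add: coeff_recip_poly)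

lemma recip_poly_smult: "recip_poly n (smult c f) = smult (cnj c) (recip_poly n f)"
  by (rule poly_eqI) (simp add: coeff_recip_poly)

lemma recip_poly_pCons_0: "recip_poly (Suc n) (pCons 0 f) = recip_poly n f"
  by (rule poly_eqI) (auto simp: coeff_recip_poly Suc_diff_le le_Suc_eq)

lemma recip_poly_recip_poly:
  assumes "degree f \<le> n"
  shows "recip_poly (Suc n) (recip_poly n f) = pCons 0 f"
proof (rule poly_eqI)
  fix j
  show "coeff (recip_poly (Suc n) (recip_poly n f)) j = coeff (pCons 0 f) j"
    using assms by (cases j) (auto simp: coeff_recip_poly coeff_eq_0)
qed

section \<open>An adjoint of differentiation\<close>

text \<open>On the unit circle \<open>cnj (q \<zeta>) = (map_poly cnj q) (1/\<zeta>)\<close>, which is holomorphic for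
  \<open>\<zeta> \<noteq> 0\<close>; differentiating this extension against \<open>d\<zeta>/(\<i>\<zeta>)\<close> produces
  \<open>cnj (\<zeta>\<^sup>2 q' \<zeta> + \<zeta> q \<zeta>)\<close>.\<close>
definition pderiv_adjoint :: "complex poly \<Rightarrow> complex poly" where
  "pderiv_adjoint q = pCons 0 (pCons 0 (pderiv q) + q)"

lemma poly_pderiv_adjoint: "poly (pderiv_adjoint q) \<zeta> = \<zeta>\<^sup>2 * poly (pderiv q) \<zeta> + \<zeta> * poly q \<zeta>"
  by (simp add: pderiv_adjoint_def power2_eq_square algebra_simps)

lemma coeff_pderiv_adjoint_Suc: "coeff (pderiv_adjoint q) (Suc m) = of_nat (Suc m) * coeff q m"
  by (cases m) (simp_all add: pderiv_adjoint_def coeff_pderiv algebra_simps)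

lemma degree_pderiv_adjoint_le: "degree (pderiv_adjoint q) \<le> Suc (degree q)"
proof (rule degree_le, intro allI impI)
  fix i assume "Suc (degree q) < i"
  then obtain m where "i = Suc m" "degree q < m"
    by (cases i) auto
  then show "coeff (pderiv_adjoint q) i = 0"
    by (simp add: coeff_pderiv_adjoint_Suc coeff_eq_0)
qed

lemma pderiv_map_poly_cnj: "pderiv (map_poly cnj p) = map_poly cnj (pderiv p)"
  by (rule poly_eqI) (simp add: coeff_pderiv coeff_map_poly)

section \<open>Orthonormal polynomials on the unit circle\<close>

locale orthonormal_polys_on_circle =
  fixes w :: "complex \<Rightarrow> complex" and \<phi> :: "nat \<Rightarrow> complex poly"
  assumes w_continuous: "continuous_on (sphere 0 1) w"
    and w_real: "\<And>\<zeta>. \<zeta> \<in> sphere 0 1 \<Longrightarrow> cnj (w \<zeta>) = w \<zeta>"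
    and degree_phi: "\<And>k. degree (\<phi> k) = k"
    and lead_coeff_phi: "\<And>k. lead_coeff (\<phi> k) \<in> \<real> \<and> Re (lead_coeff (\<phi> k)) > 0"
    and phi_orthonormal: "\<And>j k. contour_integral (circlepath 0 1)
        (\<lambda>\<zeta>. poly (\<phi> j) \<zeta> * cnj (poly (\<phi> k) \<zeta>) * w \<zeta> / (\<i> * \<zeta>))
        = (if j = k then 1 else 0)"
begin

definition inner_w :: "complex poly \<Rightarrow> complex poly \<Rightarrow> complex" where
  "inner_w p q = contour_integral (circlepath 0 1) (\<lambda>\<zeta>. poly p \<zeta> * cnj (poly q \<zeta>) * w \<zeta> / (\<i> * \<zeta>))"

definition kappa :: "nat \<Rightarrow> complex" where
  "kappa k = lead_coeff (\<phi> k)"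

definition phi_star :: "nat \<Rightarrow> complex poly" where
  "phi_star n = recip_poly n (\<phi> n)"

definition kernel_poly :: "complex \<Rightarrow> nat \<Rightarrow> complex poly" where
  "kernel_poly z n = (\<Sum>k<n. smult (cnj (poly (\<phi> k) z)) (\<phi> k))"

lemma cnj_kappa: "cnj (kappa k) = kappa k"
  using lead_coeff_phi[of k] unfolding kappa_def by (simp add: Reals_cnj_iff)

lemma kappa_nonzero: "kappa k \<noteq> 0"
  using lead_coeff_phi[of k] unfolding kappa_def by auto

lemma coeff_phi_self: "coeff (\<phi> k) k = kappa k"
  using degree_phi[of k] unfolding kappa_def by simp

lemma coeff_phi_greater: "k < j \<Longrightarrow> coeff (\<phi> k) j = 0"
  using degree_phi[of k] by (simp add: coeff_eq_0)

lemma phi_0: "\<phi> 0 = [:kappa 0:]"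
  using degree_phi[of 0] coeff_phi_self[of 0] by (metis degree_eq_zeroE coeff_pCons_0)

lemma inner_w_phi: "inner_w (\<phi> j) (\<phi> k) = (if j = k then 1 else 0)"
  unfolding inner_w_def by (rule phi_orthonormal)

lemma contour_integrable_weighted:
  assumes "continuous_on (sphere 0 1) F"
  shows "(\<lambda>\<zeta>. F \<zeta> * w \<zeta> / (\<i> * \<zeta>)) contour_integrable_on (circlepath 0 1)"
  by (rule contour_integrable_continuous_circlepath)
    (use assms w_continuous in \<open>auto intro!: continuous_intros\<close>)

lemma contour_integrable_inner_w:
  "(\<lambda>\<zeta>. poly p \<zeta> * cnj (poly q \<zeta>) * w \<zeta> / (\<i> * \<zeta>)) contour_integrable_on (circlepath 0 1)"
  by (rule contour_integrable_weighted) (intro continuous_intros)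

lemma contour_integral_cnj_weighted:
  "contour_integral (circlepath 0 1) (\<lambda>\<zeta>. cnj (F \<zeta>) * w \<zeta> / (\<i> * \<zeta>))
   = cnj (contour_integral (circlepath 0 1) (\<lambda>\<zeta>. F \<zeta> * w \<zeta> / (\<i> * \<zeta>)))"
proof -
  have "circlepath 0 1 t \<in> sphere 0 1" for t
    by (simp add: circlepath norm_mult)
  then show ?thesis
    unfolding contour_integral_unit_circle_param integral_cnj
    by (intro integral_cong) (simp add: w_real)
qed

lemma inner_w_commute: "inner_w q p = cnj (inner_w p q)"
  unfolding inner_w_def
  using contour_integral_cnj_weighted[of "\<lambda>\<zeta>. poly p \<zeta> * cnj (poly q \<zeta>)"] by (simp add: mult.commute)

lemma inner_w_add_left: "inner_w (p + q) r = inner_w p r + inner_w q r"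
  unfolding inner_w_def
  by (subst contour_integral_add[OF contour_integrable_inner_w contour_integrable_inner_w, symmetric])
    (simp add: algebra_simps add_divide_distrib)

lemma inner_w_diff_left: "inner_w (p - q) r = inner_w p r - inner_w q r"
  unfolding inner_w_def
  by (subst contour_integral_diff[OF contour_integrable_inner_w contour_integrable_inner_w, symmetric])
    (simp add: algebra_simps diff_divide_distrib)

lemma inner_w_smult_left: "inner_w (smult c p) r = c * inner_w p r"
  unfolding inner_w_def
  by (subst contour_integral_lmul[OF contour_integrable_inner_w, symmetric]) (simp add: algebra_simps)

lemma inner_w_zero_left: "inner_w 0 r = 0"
  by (simp add: inner_w_def)

lemma inner_w_sum_left: "inner_w (\<Sum>k\<in>A. f k) r = (\<Sum>k\<in>A. inner_w (f k) r)"
  by (induction A rule: infinite_finite_induct) (simp_all add: inner_w_add_left inner_w_zero_left)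

lemma inner_w_add_right: "inner_w r (p + q) = inner_w r p + inner_w r q"
  by (metis complex_cnj_add inner_w_add_left inner_w_commute)

lemma inner_w_smult_right: "inner_w r (smult c p) = cnj c * inner_w r p"
  by (metis complex_cnj_mult inner_w_smult_left inner_w_commute)

lemma inner_w_sum_right: "inner_w r (\<Sum>k\<in>A. f k) = (\<Sum>k\<in>A. inner_w r (f k))"
  by (subst (1 2) inner_w_commute) (simp add: inner_w_sum_left)

lemma inner_w_pCons_0: "inner_w (pCons 0 p) (pCons 0 q) = inner_w p q"
  unfolding inner_w_def
proof (rule contour_integral_eq)
  fix x assume "x \<in> path_image (circlepath 0 1)"
  then have "norm x = 1" by simp
  then have "x \<noteq> 0" and "cnj x = inverse x"
    by (auto simp: cnj_eq_inverse_on_unit_circle)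
  then show "poly (pCons 0 p) x * cnj (poly (pCons 0 q) x) * w x / (\<i> * x) =
             poly p x * cnj (poly q x) * w x / (\<i> * x)"
    by (simp add: field_simps)
qed

lemma phi_expansion:
  "degree p \<le> m \<Longrightarrow> \<exists>a. p = (\<Sum>k\<le>m. smult (a k) (\<phi> k))"
proof (induction m arbitrary: p)
  case 0
  then obtain c where "p = [:c:]"
    by (auto elim: degree_eq_zeroE)
  then have "p = smult (c / kappa 0) (\<phi> 0)"
    using kappa_nonzero[of 0] by (simp add: phi_0)
  then show ?case by auto
next
  case (Suc m)
  define c where "c = coeff p (Suc m) / kappa (Suc m)"
  define q where "q = p - smult c (\<phi> (Suc m))"
  have "degree q \<le> m"
  proof (rule degree_le, intro allI impI)
    fix i assume "m < i"
    then consider "i = Suc m" | "Suc m < i" by linarith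
    then show "coeff q i = 0"
    proof cases
      case 1
      then show ?thesis
        using kappa_nonzero[of "Suc m"] by (simp add: q_def c_def coeff_phi_self)
    next
      case 2
      then show ?thesis
        using Suc.prems by (simp add: q_def coeff_phi_greater coeff_eq_0)
    qed
  qed
  then obtain b where b: "q = (\<Sum>k\<le>m. smult (b k) (\<phi> k))"
    using Suc.IH by blast
  have "p = q + smult c (\<phi> (Suc m))"
    by (simp add: q_def)
  also have "\<dots> = (\<Sum>k\<le>Suc m. smult ((b(Suc m := c)) k) (\<phi> k))"
    by (simp add: b)
  finally show ?case by blast
qed

lemma inner_w_expansion_phi:
  "inner_w (\<Sum>k\<le>m. smult (a k) (\<phi> k)) (\<phi> j) = (if j \<le> m then a j else 0)"
proof -
  have "inner_w (\<Sum>k\<le>m. smult (a k) (\<phi> k)) (\<phi> j) = (\<Sum>k\<le>m. a k * (if k = j then 1 else 0))"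
    by (simp add: inner_w_sum_left inner_w_smult_left inner_w_phi)
  also have "\<dots> = (\<Sum>k\<le>m. if k = j then a k else 0)"
    by (intro sum.cong) auto
  finally show ?thesis by (simp add: sum.delta')
qed

lemma inner_w_phi_expansion:
  "inner_w (\<phi> j) (\<Sum>k\<le>m. smult (a k) (\<phi> k)) = (if j \<le> m then cnj (a j) else 0)"
  by (subst inner_w_commute) (simp add: inner_w_expansion_phi)

lemma inner_w_phi_degree_less:
  assumes "degree p < n"
  shows "inner_w (\<phi> n) p = 0"
proof -
  have "degree p \<le> n - 1"
    using assms by simp
  then obtain a where "p = (\<Sum>k\<le>n - 1. smult (a k) (\<phi> k))"
    using phi_expansion by blast
  then show ?thesis
    using assms by (simp add: inner_w_phi_expansion)
qed

lemma inner_w_phi_degree_le: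
  assumes "degree p \<le> n"
  shows "inner_w (\<phi> n) p = cnj (coeff p n) / kappa n"
proof -
  obtain a where a: "p = (\<Sum>k\<le>n. smult (a k) (\<phi> k))"
    using phi_expansion[OF assms] by auto
  have "coeff p n = (\<Sum>k\<le>n. if k = n then a n * kappa n else 0)"
    unfolding a coeff_sum by (intro sum.cong) (auto simp: coeff_phi_self coeff_phi_greater)
  then show ?thesis
    by (simp add: a inner_w_phi_expansion cnj_kappa kappa_nonzero)
qed

lemma inner_w_kernel_poly:
  assumes "degree p < n"
  shows "inner_w p (kernel_poly z n) = poly p z"
proof -
  obtain m where n: "n = Suc m"
    using assms by (cases n) auto
  obtain a where a: "p = (\<Sum>k\<le>m. smult (a k) (\<phi> k))"
    using phi_expansion[of p m] assms n by auto
  have "inner_w p (kernel_poly z n) = (\<Sum>k\<le>m. poly (\<phi> k) z * inner_w p (\<phi> k))"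
    unfolding kernel_poly_def n lessThan_Suc_atMost by (simp add: inner_w_sum_right inner_w_smult_right)
  also have "\<dots> = poly p z"
    by (simp add: a inner_w_expansion_phi poly_sum mult.commute)
  finally show ?thesis .
qed

lemma degree_phi_star_le: "degree (phi_star n) \<le> n"
  unfolding phi_star_def by (rule degree_recip_poly_le)

lemma poly_phi_star_unit_circle:
  "norm \<zeta> = 1 \<Longrightarrow> poly (phi_star n) \<zeta> = \<zeta> ^ n * cnj (poly (\<phi> n) \<zeta>)"
  unfolding phi_star_def by (rule poly_recip_poly_unit_circle) (simp_all add: degree_phi)

lemma inner_w_phi_star_self: "inner_w (phi_star n) (phi_star n) = 1"
proof -
  have "inner_w (phi_star n) (phi_star n) = inner_w (\<phi> n) (\<phi> n)"
    unfolding inner_w_def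
  proof (rule contour_integral_eq)
    fix x assume "x \<in> path_image (circlepath 0 1)"
    then have x: "norm x = 1" by simp
    then have "x ^ n * cnj x ^ n = 1"
      by (metis complex_norm_square mult.commute of_real_1 power_mult_distrib power_one)
    then show "poly (phi_star n) x * cnj (poly (phi_star n) x) * w x / (\<i> * x) =
          poly (\<phi> n) x * cnj (poly (\<phi> n) x) * w x / (\<i> * x)"
      by (simp add: poly_phi_star_unit_circle[OF x] algebra_simps)
  qed
  then show ?thesis by (simp add: inner_w_phi)
qed

lemma inner_w_phi_star_pCons_0:
  assumes "degree s < n"
  shows "inner_w (phi_star n) (pCons 0 s) = 0"
proof -
  obtain m where n: "n = Suc m" and ds: "degree s \<le> m"
    using assms by (cases n) auto
  have "inner_w (phi_star n) (pCons 0 s) = contour_integral (circlepath 0 1)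
     (\<lambda>\<zeta>. cnj (poly (\<phi> n) \<zeta> * cnj (poly (recip_poly m s) \<zeta>)) * w \<zeta> / (\<i> * \<zeta>))"
    unfolding inner_w_def
  proof (rule contour_integral_eq)
    fix x assume "x \<in> path_image (circlepath 0 1)"
    then have x: "norm x = 1" by simp
    then have "x * cnj x = 1"
      by (metis complex_norm_square of_real_1 power_one)
    then have "x ^ n * cnj x = x ^ m"
      by (simp add: n mult.assoc)
    then show "poly (phi_star n) x * cnj (poly (pCons 0 s) x) * w x / (\<i> * x) =
       cnj (poly (\<phi> n) x * cnj (poly (recip_poly m s) x)) * w x / (\<i> * x)"
      by (simp add: poly_phi_star_unit_circle[OF x] poly_recip_poly_unit_circle[OF ds x] algebra_simps)
  qed
  also have "\<dots> = cnj (inner_w (\<phi> n) (recip_poly m s))"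
    unfolding inner_w_def by (rule contour_integral_cnj_weighted)
  also have "inner_w (\<phi> n) (recip_poly m s) = 0"
    using degree_recip_poly_le[of m s] n by (intro inner_w_phi_degree_less) simp
  finally show ?thesis by simp
qed

lemma orthogonal_phi_imp_zero:
  assumes "degree s < n" and orth: "\<And>k. k < n \<Longrightarrow> inner_w s (\<phi> k) = 0"
  shows "s = 0"
proof -
  obtain m where n: "n = Suc m" and "degree s \<le> m"
    using assms(1) by (cases n) auto
  then obtain a where a: "s = (\<Sum>k\<le>m. smult (a k) (\<phi> k))"
    using phi_expansion by blast
  have "a k = 0" if "k \<le> m" for k
    using orth[of k] that by (simp add: n a inner_w_expansion_phi)
  then show ?thesis
    by (simp add: a)
qed

text \<open>Subtracting a multiple of \<open>\<phi>\<^sub>n\<^sup>*\<close> kills the constant term of \<open>f\<close>, leaving \<open>\<zeta> s\<close> with \<open>s\<close>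
  orthogonal to every \<open>\<phi>\<^sub>k\<close>, \<open>k < n\<close>.\<close>
lemma orthogonal_pCons_0_imp_smult_phi_star:
  assumes "degree f \<le> n" and orth: "\<And>s. degree s < n \<Longrightarrow> inner_w f (pCons 0 s) = 0"
  shows "\<exists>c. f = smult c (phi_star n)"
proof -
  define c where "c = poly f 0 / cnj (kappa n)"
  define g where "g = f - smult c (phi_star n)"
  have "poly (phi_star n) 0 = cnj (kappa n)"
    unfolding phi_star_def poly_recip_poly_0 by (simp add: coeff_phi_self)
  then have "coeff g 0 = 0"
    using kappa_nonzero[of n] by (simp add: g_def c_def poly_0_coeff_0[symmetric])
  moreover obtain a0 s where "g = pCons a0 s"
    by (rule pCons_cases)
  ultimately have gs: "g = pCons 0 s"
    by simp
  have "degree g \<le> n"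
    unfolding g_def using assms(1) degree_phi_star_le[of n]
    by (metis degree_diff_le degree_smult_le order_trans)
  have "s = 0"
  proof (cases "s = 0")
    case False
    with \<open>degree g \<le> n\<close> have "degree s < n"
      by (simp add: gs)
    moreover have "inner_w s (\<phi> k) = 0" if "k < n" for k
    proof -
      have "degree (\<phi> k) < n"
        using that by (simp add: degree_phi)
      have "inner_w s (\<phi> k) = inner_w g (pCons 0 (\<phi> k))"
        by (simp add: gs inner_w_pCons_0)
      also have "\<dots> = inner_w f (pCons 0 (\<phi> k)) - c * inner_w (phi_star n) (pCons 0 (\<phi> k))"
        by (simp add: g_def inner_w_diff_left inner_w_smult_left)
      also have "\<dots> = 0"
        using orth inner_w_phi_star_pCons_0 \<open>degree (\<phi> k) < n\<close> by simp
      finally show ?thesis .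
    qed
    ultimately show ?thesis
      by (rule orthogonal_phi_imp_zero)
  qed simp
  then show ?thesis
    using gs unfolding g_def by auto
qed

lemma szego_recurrence:
  "\<exists>b. \<phi> (Suc n) = smult (kappa (Suc n) / kappa n) (pCons 0 (\<phi> n)) + smult b (phi_star n)"
proof -
  define f where "f = \<phi> (Suc n) - smult (kappa (Suc n) / kappa n) (pCons 0 (\<phi> n))"
  have "degree f \<le> n"
  proof (rule degree_le, intro allI impI)
    fix i assume "n < i"
    then consider "i = Suc n" | j where "i = Suc j" "n < j" 
      by (cases i) (auto simp: less_Suc_eq)
    then show "coeff f i = 0"
      by cases (use kappa_nonzero[of n] in \<open>simp_all add: f_def coeff_phi_self coeff_phi_greater\<close>)
  qed
  moreover have "inner_w f (pCons 0 s) = 0" if "degree s < n" for s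
  proof -
    have "degree (pCons 0 s) < Suc n"
      using that by (cases "s = 0") auto
    then show ?thesis
      using that by (simp add: f_def inner_w_diff_left inner_w_smult_left inner_w_pCons_0
          inner_w_phi_degree_less del: smult_pCons)
  qed
  ultimately obtain b where "f = smult b (phi_star n)"
    using orthogonal_pCons_0_imp_smult_phi_star by blast
  then show ?thesis
    unfolding f_def by (metis diff_add_cancel add.commute)
qed

lemma szego_recurrence_norm:
  assumes rec: "\<phi> (Suc n) = smult a (pCons 0 (\<phi> n)) + smult b (phi_star n)"
  shows "a * cnj a - b * cnj b = 1"
proof -
  define t where "t = inner_w (pCons 0 (\<phi> n)) (phi_star n)"
  have "degree (phi_star n) < Suc n"
    using degree_phi_star_le[of n] by simp
  then have "0 = inner_w (\<phi> (Suc n)) (phi_star n)"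
    by (simp add: inner_w_phi_degree_less)
  also have "\<dots> = a * t + b"
    by (simp add: rec inner_w_add_left inner_w_smult_left inner_w_phi_star_self t_def del: smult_pCons)
  finally have b: "b = - (a * t)"
    by (simp add: eq_neg_iff_add_eq_0 add.commute)
  have "1 = inner_w (\<phi> (Suc n)) (\<phi> (Suc n))"
    by (simp add: inner_w_phi)
  also have "\<dots> = a * cnj a + a * cnj b * t + b * cnj a * cnj t + b * cnj b"
    using inner_w_commute[of "phi_star n" "pCons 0 (\<phi> n)"]
    by (simp add: rec inner_w_add_left inner_w_add_right inner_w_smult_left inner_w_smult_right
        inner_w_pCons_0 inner_w_phi inner_w_phi_star_self t_def algebra_simps del: smult_pCons)
  also have "\<dots> = a * cnj a - b * cnj b"
    by (simp add: b algebra_simps)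
  finally show ?thesis by simp
qed

lemma christoffel_darboux:
  "(1 - cnj z * \<zeta>) * poly (kernel_poly z n) \<zeta> =
     cnj (poly (phi_star n) z) * poly (phi_star n) \<zeta> - cnj (poly (\<phi> n) z) * poly (\<phi> n) \<zeta>"
proof (induction n)
  case 0
  have "phi_star 0 = \<phi> 0"
    unfolding phi_star_def phi_0 by (simp add: recip_poly_def monom_0 cnj_kappa)
  then show ?case by (simp add: kernel_poly_def)
next
  case (Suc n)
  obtain b where rec: "\<phi> (Suc n) = smult (kappa (Suc n) / kappa n) (pCons 0 (\<phi> n)) + smult b (phi_star n)"
    using szego_recurrence by blast
  define a where "a = kappa (Suc n) / kappa n"
  have norm_ab: "a * cnj a - b * cnj b = 1"
    using szego_recurrence_norm rec a_def by blast
  have star_rec: "phi_star (Suc n) = smult (cnj a) (phi_star n) + smult (cnj b) (pCons 0 (\<phi> n))"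
    unfolding phi_star_def rec a_def[symmetric]
    by (simp add: recip_poly_add recip_poly_smult recip_poly_pCons_0 recip_poly_recip_poly degree_phi)
  have "(1 - cnj z * \<zeta>) * poly (kernel_poly z (Suc n)) \<zeta> =
       (1 - cnj z * \<zeta>) * poly (kernel_poly z n) \<zeta> + (1 - cnj z * \<zeta>) * (cnj (poly (\<phi> n) z) * poly (\<phi> n) \<zeta>)"
    by (simp add: kernel_poly_def algebra_simps)
  also have "\<dots> = cnj (poly (phi_star n) z) * poly (phi_star n) \<zeta> - cnj (z * poly (\<phi> n) z) * (\<zeta> * poly (\<phi> n) \<zeta>)"
    unfolding Suc.IH by (simp add: algebra_simps)
  also have "\<dots> = (a * cnj a - b * cnj b) *
      (cnj (poly (phi_star n) z) * poly (phi_star n) \<zeta> - cnj (z * poly (\<phi> n) z) * (\<zeta> * poly (\<phi> n) \<zeta>))"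
    by (simp add: norm_ab)
  also have "\<dots> = cnj (poly (phi_star (Suc n)) z) * poly (phi_star (Suc n)) \<zeta>
      - cnj (poly (\<phi> (Suc n)) z) * poly (\<phi> (Suc n)) \<zeta>"
    by (simp add: star_rec rec a_def[symmetric] algebra_simps del: smult_pCons)
  finally show ?case .
qed

lemma inner_w_phi_kernel_poly: "inner_w (\<phi> n) (kernel_poly z n) = 0"
  by (simp add: kernel_poly_def inner_w_sum_right inner_w_smult_right inner_w_phi)

lemma degree_kernel_poly_le: "degree (kernel_poly z (Suc m)) \<le> m"
  unfolding kernel_poly_def
  by (rule degree_le) (auto simp: coeff_sum coeff_phi_greater intro!: sum.neutral)

lemma coeff_kernel_poly_top: "coeff (kernel_poly z (Suc m)) m = cnj (poly (\<phi> m) z) * kappa m"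
proof -
  have "coeff (kernel_poly z (Suc m)) m = (\<Sum>k<Suc m. if k = m then cnj (poly (\<phi> m) z) * kappa m else 0)"
    unfolding kernel_poly_def coeff_sum coeff_smult
    by (intro sum.cong refl) (auto simp: coeff_phi_greater coeff_phi_self)
  then show ?thesis by simp
qed

lemma cnj_kernel_poly_unit_circle:
  assumes "norm \<zeta> = 1" "\<zeta> \<noteq> z"
  shows "cnj (poly (kernel_poly z n) \<zeta>) = \<zeta> *
    (poly (phi_star n) z * cnj (poly (phi_star n) \<zeta>) - poly (\<phi> n) z * cnj (poly (\<phi> n) \<zeta>)) / (\<zeta> - z)"
proof -
  have nz: "\<zeta> \<noteq> 0" and cz: "cnj \<zeta> = inverse \<zeta>"
    using assms(1) by (auto simp: cnj_eq_inverse_on_unit_circle)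
  have "(1 - z / \<zeta>) * cnj (poly (kernel_poly z n) \<zeta>) =
      poly (phi_star n) z * cnj (poly (phi_star n) \<zeta>) - poly (\<phi> n) z * cnj (poly (\<phi> n) \<zeta>)"
    using arg_cong[OF christoffel_darboux[of z \<zeta> n], of cnj] by (simp add: cz divide_inverse)
  then show ?thesis
    using nz assms(2) by (simp add: field_simps)
qed

text \<open>Writing \<open>g \<zeta> = g z - (z - \<zeta>) D\<close> with \<open>D\<close> the difference quotient, the factor \<open>z - \<zeta>\<close>
  cancels the denominator of the Christoffel--Darboux formula.
  At \<open>\<zeta> = z\<close> the difference quotient is \<open>0\<close> (division by zero), which is harmless.\<close>
lemma phi_cnj_kernel_poly_mult_unit_circle:
  assumes "norm \<zeta> = 1"
  shows "poly (\<phi> n) \<zeta> * cnj (poly (kernel_poly z n) \<zeta>) * g \<zeta> * w \<zeta> / (\<i> * \<zeta>) =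
      g z * (poly (\<phi> n) \<zeta> * cnj (poly (kernel_poly z n) \<zeta>) * w \<zeta> / (\<i> * \<zeta>))
    - \<i> * poly (phi_star n) z * ((g z - g \<zeta>) / (z - \<zeta>) * poly (\<phi> n) \<zeta> * cnj (poly (phi_star n) \<zeta>) * w \<zeta>)
    + \<i> * poly (\<phi> n) z * ((g z - g \<zeta>) / (z - \<zeta>) * poly (\<phi> n) \<zeta> * cnj (poly (\<phi> n) \<zeta>) * w \<zeta>)"
proof (cases "\<zeta> = z")
  case True
  then show ?thesis by simp
next
  case False
  define D where "D = (g z - g \<zeta>) / (z - \<zeta>)"
  have "\<zeta> \<noteq> 0"
    using assms by auto
  have g: "g \<zeta> = g z - (z - \<zeta>) * D"
    using False by (simp add: D_def)
  have K: "(z - \<zeta>) * cnj (poly (kernel_poly z n) \<zeta>) / (\<i> * \<zeta>) =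
      \<i> * (poly (phi_star n) z * cnj (poly (phi_star n) \<zeta>) - poly (\<phi> n) z * cnj (poly (\<phi> n) \<zeta>))"
    using False \<open>\<zeta> \<noteq> 0\<close> by (simp add: cnj_kernel_poly_unit_circle[OF assms False] field_simps)
  have "poly (\<phi> n) \<zeta> * cnj (poly (kernel_poly z n) \<zeta>) * g \<zeta> * w \<zeta> / (\<i> * \<zeta>) =
      g z * (poly (\<phi> n) \<zeta> * cnj (poly (kernel_poly z n) \<zeta>) * w \<zeta> / (\<i> * \<zeta>))
      - D * poly (\<phi> n) \<zeta> * w \<zeta> * ((z - \<zeta>) * cnj (poly (kernel_poly z n) \<zeta>) / (\<i> * \<zeta>))"
    using \<open>\<zeta> \<noteq> 0\<close> unfolding g by (simp add: field_simps)
  also have "\<dots> = g z * (poly (\<phi> n) \<zeta> * cnj (poly (kernel_poly z n) \<zeta>) * w \<zeta> / (\<i> * \<zeta>))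
      - \<i> * poly (phi_star n) z * (D * poly (\<phi> n) \<zeta> * cnj (poly (phi_star n) \<zeta>) * w \<zeta>)
      + \<i> * poly (\<phi> n) z * (D * poly (\<phi> n) \<zeta> * cnj (poly (\<phi> n) \<zeta>) * w \<zeta>)"
    unfolding K by (simp add: algebra_simps)
  finally show ?thesis
    unfolding D_def .
qed

lemma contour_integral_phi_kernel_mult:
  assumes moments: "\<And>m::int. (\<lambda>\<zeta>. (g z - g \<zeta>) / (z - \<zeta>) * \<zeta> powi m * w \<zeta> / (\<i> * \<zeta>))
      contour_integrable_on circlepath 0 1"
  shows "contour_integral (circlepath 0 1)
      (\<lambda>\<zeta>. poly (\<phi> n) \<zeta> * cnj (poly (kernel_poly z n) \<zeta>) * g \<zeta> * w \<zeta> / (\<i> * \<zeta>)) =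
    - \<i> * poly (phi_star n) z * contour_integral (circlepath 0 1) (\<lambda>\<zeta>. (g z - g \<zeta>) / (z - \<zeta>)
          * poly (\<phi> n) \<zeta> * cnj (poly (phi_star n) \<zeta>) * w \<zeta>)
    + \<i> * poly (\<phi> n) z * contour_integral (circlepath 0 1) (\<lambda>\<zeta>. (g z - g \<zeta>) / (z - \<zeta>)
          * poly (\<phi> n) \<zeta> * cnj (poly (\<phi> n) \<zeta>) * w \<zeta>)"
proof -
  define C where "C = circlepath (0::complex) 1"
  define G0 where "G0 = (\<lambda>\<zeta>. poly (\<phi> n) \<zeta> * cnj (poly (kernel_poly z n) \<zeta>) * w \<zeta> / (\<i> * \<zeta>))"
  define G1 where "G1 = (\<lambda>\<zeta>. (g z - g \<zeta>) / (z - \<zeta>) * poly (\<phi> n) \<zeta> * cnj (poly (phi_star n) \<zeta>) * w \<zeta>)"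
  define G2 where "G2 = (\<lambda>\<zeta>. (g z - g \<zeta>) / (z - \<zeta>) * poly (\<phi> n) \<zeta> * cnj (poly (\<phi> n) \<zeta>) * w \<zeta>)"
  have G0: "G0 contour_integrable_on C"
    unfolding G0_def C_def by (rule contour_integrable_inner_w)
  have G1: "G1 contour_integrable_on C" and G2: "G2 contour_integrable_on C"
    unfolding G1_def G2_def C_def by (intro contour_integrable_poly_cnj_poly moments)+
  have "contour_integral C (\<lambda>\<zeta>. poly (\<phi> n) \<zeta> * cnj (poly (kernel_poly z n) \<zeta>) * g \<zeta> * w \<zeta> / (\<i> * \<zeta>))
      = contour_integral C (\<lambda>\<zeta>. g z * G0 \<zeta> - \<i> * poly (phi_star n) z * G1 \<zeta> + \<i> * poly (\<phi> n) z * G2 \<zeta>)"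
    by (rule contour_integral_eq)
      (simp add: C_def G0_def G1_def G2_def phi_cnj_kernel_poly_mult_unit_circle)
  also have "\<dots> = g z * contour_integral C G0 - \<i> * poly (phi_star n) z * contour_integral C G1
      + \<i> * poly (\<phi> n) z * contour_integral C G2"
    by (intro contour_integral_unique has_contour_integral_add has_contour_integral_diff
        has_contour_integral_lmul has_contour_integral_integral G0 G1 G2)
  also have "contour_integral C G0 = 0"
    using inner_w_phi_kernel_poly unfolding inner_w_def G0_def C_def .
  finally show ?thesis
    by (simp add: C_def G1_def G2_def)
qed

end

section \<open>The external field\<close>

locale orthonormal_polys_external_field = orthonormal_polys_on_circle w \<phi> for w \<phi> +
  fixes v :: "complex \<Rightarrow> complex" and S :: "complex set"
  assumes S_open: "open S" and sphere_subset_S: "sphere 0 1 \<subseteq> S"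
    and v_holomorphic: "v holomorphic_on S"
    and w_exp: "\<And>z. z \<in> S \<Longrightarrow> w z = exp (- v z)"
begin

lemma has_field_derivative_w:
  assumes "\<zeta> \<in> S"
  shows "(w has_field_derivative (- deriv v \<zeta> * w \<zeta>)) (at \<zeta>)"
proof -
  have "(v has_field_derivative deriv v \<zeta>) (at \<zeta>)"
    by (rule holomorphic_derivI[OF v_holomorphic S_open assms])
  then have "((\<lambda>x. exp (- v x)) has_field_derivative (- deriv v \<zeta> * w \<zeta>)) (at \<zeta>)"
    using w_exp[OF assms] by (auto intro!: derivative_eq_intros)
  then show ?thesis
    by (rule has_field_derivative_transform_within_open[OF _ S_open assms]) (simp add: w_exp)
qed

lemma continuous_on_deriv_v: "continuous_on (sphere 0 1) (deriv v)"
  using holomorphic_on_imp_continuous_on[OF holomorphic_deriv[OF v_holomorphic S_open]] sphere_subset_S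
  by (rule continuous_on_subset)

lemma has_field_derivative_reflected_product:
  assumes "\<zeta> \<in> S" "\<zeta> \<noteq> 0"
  shows "((\<lambda>\<zeta>. poly p \<zeta> * poly (map_poly cnj q) (inverse \<zeta>) * w \<zeta> / (\<i> * \<zeta>)) has_field_derivative
      (poly (pderiv p) \<zeta> * poly (map_poly cnj q) (inverse \<zeta>)
       - poly p \<zeta> * (poly (pderiv (map_poly cnj q)) (inverse \<zeta>) * inverse \<zeta> ^ 2
                      + poly (map_poly cnj q) (inverse \<zeta>) / \<zeta>)
       - poly p \<zeta> * poly (map_poly cnj q) (inverse \<zeta>) * deriv v \<zeta>) * w \<zeta> / (\<i> * \<zeta>)) (at \<zeta>)"
    (is "(?F has_field_derivative ?F') _")
proof -
  define E where "E = (\<lambda>\<zeta>. poly (map_poly cnj q) (inverse \<zeta>))"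
  define E' where "E' = poly (pderiv (map_poly cnj q)) (inverse \<zeta>) * - (inverse \<zeta> ^ Suc (Suc 0))"
  have "(E has_field_derivative E') (at \<zeta>)"
    unfolding E_def E'_def using assms(2) by (rule DERIV_chain2[OF poly_DERIV DERIV_inverse])
  then have "(?F has_field_derivative
      (((poly (pderiv p) \<zeta> * E \<zeta> + E' * poly p \<zeta>) * w \<zeta> + (- deriv v \<zeta> * w \<zeta>) * (poly p \<zeta> * E \<zeta>))
        * (\<i> * \<zeta>) - poly p \<zeta> * E \<zeta> * w \<zeta> * (\<i> * 1)) / ((\<i> * \<zeta>) * (\<i> * \<zeta>))) (at \<zeta>)"
    unfolding E_def using assms
    by (intro DERIV_divide[OF DERIV_mult[OF DERIV_mult[OF poly_DERIV] has_field_derivative_w]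
          DERIV_cmult[OF DERIV_ident]]) auto
  also have "(((poly (pderiv p) \<zeta> * E \<zeta> + E' * poly p \<zeta>) * w \<zeta> + (- deriv v \<zeta> * w \<zeta>) * (poly p \<zeta> * E \<zeta>))
        * (\<i> * \<zeta>) - poly p \<zeta> * E \<zeta> * w \<zeta> * (\<i> * 1)) / ((\<i> * \<zeta>) * (\<i> * \<zeta>)) = ?F'"
    using assms(2) by (simp add: E_def E'_def power2_eq_square field_simps)
  finally show ?thesis .
qed

text \<open>On the circle, \<open>p \<zeta> cnj (q \<zeta>) w \<zeta> / (\<i>\<zeta>)\<close> is the restriction of a function holomorphic on
  \<open>S - {0}\<close>, so its complex derivative integrates to zero around the circle.\<close>
lemma by_parts_integrand_has_contour_integral_0:
  "((\<lambda>\<zeta>. poly (pderiv p) \<zeta> * cnj (poly q \<zeta>) * w \<zeta> / (\<i> * \<zeta>)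
        - poly p \<zeta> * cnj (poly (pderiv_adjoint q) \<zeta>) * w \<zeta> / (\<i> * \<zeta>)
        - poly p \<zeta> * cnj (poly q \<zeta>) * deriv v \<zeta> * w \<zeta> / (\<i> * \<zeta>)) has_contour_integral 0)
    (circlepath 0 1)"
proof (rule has_contour_integral_eq)
  show "((\<lambda>\<zeta>. (poly (pderiv p) \<zeta> * poly (map_poly cnj q) (inverse \<zeta>)
       - poly p \<zeta> * (poly (pderiv (map_poly cnj q)) (inverse \<zeta>) * inverse \<zeta> ^ 2
                      + poly (map_poly cnj q) (inverse \<zeta>) / \<zeta>)
       - poly p \<zeta> * poly (map_poly cnj q) (inverse \<zeta>) * deriv v \<zeta>) * w \<zeta> / (\<i> * \<zeta>))
      has_contour_integral 0) (circlepath 0 1)"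
    using has_field_derivative_reflected_product sphere_subset_S
    by (intro Cauchy_theorem_primitive[where S = "S - {0}"]) (auto intro: has_field_derivative_at_within)
next
  fix \<zeta> :: complex assume "\<zeta> \<in> path_image (circlepath 0 1)"
  then have "norm \<zeta> = 1" by simp
  then have "inverse \<zeta> = cnj \<zeta>" "inverse (cnj \<zeta>) = \<zeta>"
    by (simp_all add: cnj_eq_inverse_on_unit_circle)
  then have E: "poly (map_poly cnj q) (inverse \<zeta>) = cnj (poly q \<zeta>)"
    and E': "poly (pderiv (map_poly cnj q)) (inverse \<zeta>) * inverse \<zeta> ^ 2 + poly (map_poly cnj q) (inverse \<zeta>) / \<zeta>
      = cnj (poly (pderiv_adjoint q) \<zeta>)"
    by (simp_all add: pderiv_map_poly_cnj poly_pderiv_adjoint divide_inverse algebra_simps)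
  show "(poly (pderiv p) \<zeta> * poly (map_poly cnj q) (inverse \<zeta>)
       - poly p \<zeta> * (poly (pderiv (map_poly cnj q)) (inverse \<zeta>) * inverse \<zeta> ^ 2
                      + poly (map_poly cnj q) (inverse \<zeta>) / \<zeta>)
       - poly p \<zeta> * poly (map_poly cnj q) (inverse \<zeta>) * deriv v \<zeta>) * w \<zeta> / (\<i> * \<zeta>) =
    poly (pderiv p) \<zeta> * cnj (poly q \<zeta>) * w \<zeta> / (\<i> * \<zeta>)
        - poly p \<zeta> * cnj (poly (pderiv_adjoint q) \<zeta>) * w \<zeta> / (\<i> * \<zeta>)
        - poly p \<zeta> * cnj (poly q \<zeta>) * deriv v \<zeta> * w \<zeta> / (\<i> * \<zeta>)"
    unfolding E' unfolding E by (simp add: left_diff_distrib diff_divide_distrib)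
qed

lemma integration_by_parts_unit_circle:
  "inner_w (pderiv p) q = inner_w p (pderiv_adjoint q)
     + contour_integral (circlepath 0 1) (\<lambda>\<zeta>. poly p \<zeta> * cnj (poly q \<zeta>) * deriv v \<zeta> * w \<zeta> / (\<i> * \<zeta>))"
proof -
  have "(\<lambda>\<zeta>. poly p \<zeta> * cnj (poly q \<zeta>) * deriv v \<zeta> * w \<zeta> / (\<i> * \<zeta>)) contour_integrable_on circlepath 0 1"
    by (intro contour_integrable_weighted continuous_intros continuous_on_deriv_v)
  then have "inner_w (pderiv p) q - inner_w p (pderiv_adjoint q)
      - contour_integral (circlepath 0 1) (\<lambda>\<zeta>. poly p \<zeta> * cnj (poly q \<zeta>) * deriv v \<zeta> * w \<zeta> / (\<i> * \<zeta>))
      = 0"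
    unfolding inner_w_def
    using contour_integral_unique[OF by_parts_integrand_has_contour_integral_0[of p q]]
    by (simp add: contour_integral_diff contour_integrable_diff contour_integrable_inner_w)
  then show ?thesis
    by (simp add: algebra_simps)
qed

lemma pderiv_phi_formula:
  assumes "n \<ge> 1" and "z \<in> S"
    and moments: "\<And>m::int. (\<lambda>\<zeta>. (deriv v z - deriv v \<zeta>) / (z - \<zeta>) * \<zeta> powi m * w \<zeta> / (\<i> * \<zeta>))
          contour_integrable_on circlepath 0 1"
  shows "poly (pderiv (\<phi> n)) z =
      of_nat n * (kappa (n - 1) / kappa n) * poly (\<phi> (n - 1)) z
    - \<i> * poly (phi_star n) z *
        contour_integral (circlepath 0 1) (\<lambda>\<zeta>. (deriv v z - deriv v \<zeta>) / (z - \<zeta>)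
          * poly (\<phi> n) \<zeta> * cnj (poly (phi_star n) \<zeta>) * w \<zeta>)
    + \<i> * poly (\<phi> n) z *
        contour_integral (circlepath 0 1) (\<lambda>\<zeta>. (deriv v z - deriv v \<zeta>) / (z - \<zeta>)
          * poly (\<phi> n) \<zeta> * cnj (poly (\<phi> n) \<zeta>) * w \<zeta>)"
proof -
  obtain m where n: "n = Suc m"
    using assms(1) by (cases n) auto
  define K where "K = kernel_poly z n"
  have "degree (pderiv_adjoint K) \<le> n"
    using degree_pderiv_adjoint_le[of K] degree_kernel_poly_le[of z m] by (simp add: K_def n)
  then have top: "inner_w (\<phi> n) (pderiv_adjoint K) = of_nat n * (kappa (n - 1) / kappa n) * poly (\<phi> (n - 1)) z"
    by (simp add: inner_w_phi_degree_le n coeff_pderiv_adjoint_Suc K_def coeff_kernel_poly_top cnj_kappa)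
  have "poly (pderiv (\<phi> n)) z = inner_w (pderiv (\<phi> n)) K"
    unfolding K_def by (rule inner_w_kernel_poly[symmetric]) (simp add: n degree_pderiv degree_phi)
  also have "\<dots> = inner_w (\<phi> n) (pderiv_adjoint K) + contour_integral (circlepath 0 1)
      (\<lambda>\<zeta>. poly (\<phi> n) \<zeta> * cnj (poly K \<zeta>) * deriv v \<zeta> * w \<zeta> / (\<i> * \<zeta>))"
    by (rule integration_by_parts_unit_circle)
  also note top
  also have "contour_integral (circlepath 0 1)
      (\<lambda>\<zeta>. poly (\<phi> n) \<zeta> * cnj (poly K \<zeta>) * deriv v \<zeta> * w \<zeta> / (\<i> * \<zeta>)) =
    - \<i> * poly (phi_star n) z * contour_integral (circlepath 0 1) (\<lambda>\<zeta>. (deriv v z - deriv v \<zeta>) / (z - \<zeta>)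
          * poly (\<phi> n) \<zeta> * cnj (poly (phi_star n) \<zeta>) * w \<zeta>)
    + \<i> * poly (\<phi> n) z * contour_integral (circlepath 0 1) (\<lambda>\<zeta>. (deriv v z - deriv v \<zeta>) / (z - \<zeta>)
          * poly (\<phi> n) \<zeta> * cnj (poly (\<phi> n) \<zeta>) * w \<zeta>)"
    unfolding K_def by (rule contour_integral_phi_kernel_mult[OF moments])
  finally show ?thesis
    by (simp only: add_diff_eq diff_conv_add_uminus add.assoc mult_minus_left)
qed

end

theorem theorem2p1:
  fixes w v :: "complex \<Rightarrow> complex" and S :: "complex set"
    and \<phi> :: "nat \<Rightarrow> complex poly" and n :: nat
  assumes S_open: "open S" and S_circ: "sphere 0 1 \<subseteq> S"
    and v_hol: "v holomorphic_on S"
    and w_v: "\<And>z. z \<in> S \<Longrightarrow> w z = exp (- v z)"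
    and w_pos: "\<And>\<zeta>. \<zeta> \<in> sphere 0 1 \<Longrightarrow> w \<zeta> \<in> \<real> \<and> Re (w \<zeta>) > 0"
    and w_norm: "contour_integral (circlepath 0 1) (\<lambda>\<zeta>. w \<zeta> / (\<i> * \<zeta>)) = 1"
    and phi_deg: "\<And>k. degree (\<phi> k) = k"
    and phi_lead: "\<And>k. lead_coeff (\<phi> k) \<in> \<real> \<and> Re (lead_coeff (\<phi> k)) > 0"
    and phi_orth: "\<And>j k. contour_integral (circlepath 0 1)
        (\<lambda>\<zeta>. poly (\<phi> j) \<zeta> * cnj (poly (\<phi> k) \<zeta>) * w \<zeta> / (\<i> * \<zeta>))
        = (if j = k then 1 else 0)"
    and moments: "\<And>m::int. (\<lambda>\<zeta>. \<zeta> powi m * w \<zeta> / (\<i> * \<zeta>))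
        contour_integrable_on (circlepath 0 1)"
    and v_integrals: "\<And>(z::complex) (m::int). z \<in> S \<Longrightarrow>
        (\<lambda>\<zeta>. (deriv v z - deriv v \<zeta>) / (z - \<zeta>) * \<zeta> powi m * w \<zeta> / (\<i> * \<zeta>))
          contour_integrable_on (circlepath 0 1)"
    and n_pos: "n \<ge> 1"
  shows "\<forall>z\<in>S. poly (pderiv (\<phi> n)) z =
      of_nat n * (lead_coeff (\<phi> (n - 1)) / lead_coeff (\<phi> n)) * poly (\<phi> (n - 1)) z
    - \<i> * poly (recip_poly n (\<phi> n)) z *
        contour_integral (circlepath 0 1) (\<lambda>\<zeta>. (deriv v z - deriv v \<zeta>) / (z - \<zeta>)
          * poly (\<phi> n) \<zeta> * cnj (poly (recip_poly n (\<phi> n)) \<zeta>) * w \<zeta>)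
    + \<i> * poly (\<phi> n) z *
        contour_integral (circlepath 0 1) (\<lambda>\<zeta>. (deriv v z - deriv v \<zeta>) / (z - \<zeta>)
          * poly (\<phi> n) \<zeta> * cnj (poly (\<phi> n) \<zeta>) * w \<zeta>)"
proof -
  have "continuous_on S (\<lambda>z. exp (- v z))"
    using holomorphic_on_imp_continuous_on[OF v_hol] by (intro continuous_intros)
  then have "continuous_on S w"
    by (rule continuous_on_eq) (simp add: w_v)
  then have "continuous_on (sphere 0 1) w"
    using S_circ by (rule continuous_on_subset)
  moreover have "\<And>\<zeta>. \<zeta> \<in> sphere 0 1 \<Longrightarrow> cnj (w \<zeta>) = w \<zeta>"
    using w_pos by (simp add: Reals_cnj_iff)
  ultimately interpret orthonormal_polys_external_field w \<phi> v S
    by unfold_locales (use phi_deg phi_lead phi_orth S_open S_circ v_hol w_v in auto)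
  show ?thesis
    using pderiv_phi_formula[OF n_pos _ v_integrals] unfolding kappa_def phi_star_def by blast
qed

end
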